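(* Assume $\ell\ll1$. There is an absolute constant $c>0$ and, for each $q>0$, a constant $c_q$ such that for $N$ sufficiently large, for all $\mathbf x\in\Lambda^N$, all $i$ and all $j\ne j'$ (both $\ne i$): $\|\tilde\chi_{ij}\tilde\chi_{ij'}F_{ij}^q\|_\infty\le e^{-cq/\ell^\varepsilon}$, and for every fixed $i$, $\sum_{j\ne i}\tilde\chi_{ij}F_{ij}^q\le c_q$.
   Context: $\Lambda=\mathbb R^3/\mathbb Z^3$ with torus distance $|x|$. $\ell=\ell(N)$ a length scale; $A\ll B$ means $A/B=O(N^{-\alpha})$ for some $\alpha>0$. $h(x)=\exp(-\sqrt{|x|^2+\ell^2}/\ell)$; fixed $0<\varepsilon<1/10$; $F(u)=e^{-u/\ell^\varepsilon}$; for $\mathbf x\in\Lambda^N$ and $i\ne j$, $F_{ij}=F\big(\sum_{k\ne i,j}[h(x_k-x_i)+h(x_k-x_j)]\big)$ and $\tilde\chi_{ij}=1(|x_i-x_j|\le\ell)$. *)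

theory Defs
  imports "HOL-Analysis.Analysis" "HOL-Library.Landau_Symbols"
begin

text \<open>Points of the torus R^3/Z^3 are represented by vectors in R^3; all quantities
below are Z^3-periodic. The torus norm |v| is the distance of v to the lattice Z^3.\<close>

definition lattice3 :: "(real ^ 3) set" where
  "lattice3 = {w. \<forall>i. w $ i \<in> \<int>}"

definition tnorm :: "real ^ 3 \<Rightarrow> real" where
  "tnorm v = infdist v lattice3"

definition hfun :: "real \<Rightarrow> real ^ 3 \<Rightarrow> real" where
  "hfun l v = exp (- sqrt ((tnorm v)\<^sup>2 + l\<^sup>2) / l)"

definition Ffun :: "real \<Rightarrow> real \<Rightarrow> real \<Rightarrow> real" where
  "Ffun l eps u = exp (- u / l powr eps)"

definition Fij :: "nat \<Rightarrow> real \<Rightarrow> real \<Rightarrow> (nat \<Rightarrow> real ^ 3) \<Rightarrow> nat \<Rightarrow> nat \<Rightarrow> real" where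
  "Fij N l eps x i j = Ffun l eps
     (\<Sum>k\<in>{0..<N} - {i, j}. hfun l (x k - x i) + hfun l (x k - x j))"

definition chi :: "real \<Rightarrow> (nat \<Rightarrow> real ^ 3) \<Rightarrow> nat \<Rightarrow> nat \<Rightarrow> real" where
  "chi l x i j = (if tnorm (x i - x j) \<le> l then 1 else 0)"

end

theory Submission
  imports Defs "HOL-Real_Asymp.Real_Asymp"
begin

text \<open>If j and j' are both within distance l of i, then the sum defining F_ij contains the
term h(x_j' - x_i) \<ge> e^-2, so F_ij^q \<le> exp(-e^-2 q / l^eps); this gives c = e^-2. The
constant c_q can be taken to be 1: either at most one j is close to i, and F \<le> 1, or every
close j has a close partner, and then the whole sum is at most N exp(-e^-2 q / l^eps), which
tends to 0 because l \<le> K N^-alpha makes the exponent grow like a power of N.\<close>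

lemma infdist_uminus:
  fixes v :: "'a::real_normed_vector"
  assumes "uminus ` A = A"
  shows "infdist (- v) A = infdist v A"
proof (cases "A = {}")
  case False
  have "infdist (- v) A = (INF a\<in>uminus ` A. dist (- v) a)"
    using False assms by (simp add: infdist_notempty)
  also have "\<dots> = (INF a\<in>A. dist v a)"
    by (simp add: image_comp o_def dist_norm norm_minus_commute)
  finally show ?thesis
    using False by (simp add: infdist_notempty)
qed (simp add: infdist_def)

lemma uminus_lattice3: "uminus ` lattice3 = lattice3"
proof -
  have "- a \<in> lattice3" if "a \<in> lattice3" for a
    using that by (auto simp: lattice3_def)
  moreover have "a \<in> uminus ` lattice3" if "a \<in> lattice3" for a
    using image_eqI[of a uminus "- a"] calculation[OF that] by simp
  ultimately show ?thesis
    by blast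
qed

lemma tnorm_minus_commute: "tnorm (a - b) = tnorm (b - a)"
  by (metis minus_diff_eq tnorm_def infdist_uminus uminus_lattice3)

lemma tnorm_nonneg: "0 \<le> tnorm v"
  by (simp add: tnorm_def infdist_nonneg)

lemma hfun_nonneg: "0 \<le> hfun l v"
  by (simp add: hfun_def)

lemma hfun_ge_exp_minus_2:
  assumes "0 < l" "tnorm v \<le> l"
  shows "exp (-2) \<le> hfun l v"
proof -
  have "(tnorm v)\<^sup>2 \<le> l\<^sup>2"
    using assms tnorm_nonneg by (intro power_mono) auto
  then have "sqrt ((tnorm v)\<^sup>2 + l\<^sup>2) \<le> sqrt ((2 * l)\<^sup>2)"
    by (simp add: power_mult_distrib) (use zero_le_power2[of l] in linarith)
  also have "\<dots> = 2 * l"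
    using assms by (intro real_sqrt_unique) auto
  finally show ?thesis
    using assms by (simp add: hfun_def divide_simps)
qed

lemma Ffun_powr: "Ffun l eps u powr q = exp (- q * u / l powr eps)"
  by (simp add: Ffun_def powr_def)

lemma Fij_powr_le_1:
  assumes "0 < l" "0 < q"
  shows "Fij N l eps x i j powr q \<le> 1"
proof -
  have "0 \<le> (\<Sum>k\<in>{0..<N} - {i, j}. hfun l (x k - x i) + hfun l (x k - x j))"
    by (intro sum_nonneg add_nonneg_nonneg hfun_nonneg)
  then show ?thesis
    using assms by (simp add: Fij_def Ffun_powr divide_nonpos_pos)
qed

lemma Fij_powr_le_if_close:
  assumes "0 < l" "0 < q" "j' < N" "j' \<noteq> i" "j' \<noteq> j" "tnorm (x j' - x i) \<le> l"
  shows "Fij N l eps x i j powr q \<le> exp (- exp (-2) * q / l powr eps)"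
proof -
  define u where "u = (\<Sum>k\<in>{0..<N} - {i, j}. hfun l (x k - x i) + hfun l (x k - x j))"
  have "hfun l (x j' - x i) + hfun l (x j' - x j) \<le> u"
    unfolding u_def using assms(3-5)
    by (intro member_le_sum[where f = "\<lambda>k. hfun l (x k - x i) + hfun l (x k - x j)"])
       (auto intro!: add_nonneg_nonneg hfun_nonneg)
  then have "exp (-2) \<le> u"
    using hfun_ge_exp_minus_2[OF assms(1,6)] hfun_nonneg[of l "x j' - x j"] by linarith
  then have "- q * u / l powr eps \<le> - exp (-2) * q / l powr eps"
    using assms(1,2) by (simp add: divide_simps mult.commute)
  then show ?thesis
    by (simp add: Fij_def Ffun_powr u_def)
qed

lemma chi_mult_chi_mult_Fij_powr_le:
  assumes "0 < l" "0 < q" "j' < N" "j' \<noteq> i" "j' \<noteq> j"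
  shows "chi l x i j * chi l x i j' * Fij N l eps x i j powr q \<le> exp (- exp (-2) * q / l powr eps)"
proof (cases "tnorm (x i - x j) \<le> l \<and> tnorm (x i - x j') \<le> l")
  case True
  then have "tnorm (x j' - x i) \<le> l"
    by (simp add: tnorm_minus_commute)
  with True Fij_powr_le_if_close[OF assms] show ?thesis
    by (simp add: chi_def)
next
  case False
  then show ?thesis
    by (auto simp: chi_def)
qed

lemma sum_le_1_if_crowded_terms_small:
  fixes t :: "'a \<Rightarrow> real" and \<delta> :: real
  assumes fin: "finite D"
    and nonneg: "\<And>j. j \<in> D \<Longrightarrow> 0 \<le> t j"
    and le_1: "\<And>j. j \<in> D \<Longrightarrow> t j \<le> 1"
    and support: "\<And>j. j \<in> D \<Longrightarrow> \<not> P j \<Longrightarrow> t j = 0"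
    and crowded: "\<And>j j'. j \<in> D \<Longrightarrow> j' \<in> D \<Longrightarrow> j \<noteq> j' \<Longrightarrow> P j \<Longrightarrow> P j' \<Longrightarrow> t j \<le> \<delta>"
    and small: "card D * \<delta> \<le> 1"
  shows "sum t D \<le> 1"
proof -
  define S where "S = {j \<in> D. P j}"
  have "finite S"
    using fin by (simp add: S_def)
  have sum_S: "sum t D = sum t S"
    using fin support by (intro sum.mono_neutral_right) (auto simp: S_def)
  show ?thesis
  proof (cases "card S \<le> 1")
    case True
    have "sum t S \<le> real (card S) * 1"
      using le_1 by (intro sum_bounded_above) (auto simp: S_def)
    with True sum_S show ?thesis
      by simp
  next
    case False
    have partner: "\<exists>j'\<in>S. j' \<noteq> j" if "j \<in> S" for j
      using False \<open>finite S\<close> that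
      by (metis card_le_Suc0_iff_eq le_numeral_extra(4) One_nat_def)
    obtain j0 where "j0 \<in> S"
      using False by fastforce
    then have "0 \<le> \<delta>"
      using partner nonneg crowded by (fastforce simp: S_def)
    have "t j \<le> \<delta>" if j: "j \<in> D" for j
    proof (cases "P j")
      case True
      then obtain j' where "j' \<in> S" "j' \<noteq> j"
        using partner j by (auto simp: S_def)
      with j True show ?thesis
        by (intro crowded[of j j']) (auto simp: S_def)
    qed (use j support \<open>0 \<le> \<delta>\<close> in simp)
    then have "sum t D \<le> card D * \<delta>"
      by (intro sum_bounded_above) auto
    with small show ?thesis
      by simp
  qed
qed

lemma tendsto_mult_exp_neg_inverse_powr:
  fixes ell :: "nat \<Rightarrow> real"
  assumes "0 < c" "0 < eps" "0 < \<alpha>" "\<And>N. 0 < ell N"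
    and "ell \<in> O(\<lambda>N. real N powr (-\<alpha>))"
  shows "((\<lambda>N. real N * exp (- c / ell N powr eps)) \<longlongrightarrow> 0) at_top"
proof -
  obtain K where K: "K > 0" and ell_le: "\<forall>\<^sub>F N in at_top. norm (ell N) \<le> K * norm (real N powr (-\<alpha>))"
    using assms(5) by (elim landau_o.bigE) auto
  define b where "b = c / K powr eps"
  have "0 < b"
    using assms(1) K by (simp add: b_def)
  then have majorant: "((\<lambda>N::nat. real N * exp (- b * real N powr (\<alpha> * eps))) \<longlongrightarrow> 0) at_top"
    using assms(2,3) by real_asymp
  have "\<forall>\<^sub>F N in at_top. 0 \<le> real N * exp (- c / ell N powr eps)"
    by simp
  moreover have "\<forall>\<^sub>F N in at_top. real N * exp (- c / ell N powr eps) \<le> real N * exp (- b * real N powr (\<alpha> * eps))"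
    using ell_le eventually_gt_at_top[of 0]
  proof eventually_elim
    case (elim N)
    then have N: "real N > 0"
      by simp
    have "ell N powr eps \<le> (K * real N powr (-\<alpha>)) powr eps"
      using elim(1) assms(2) assms(4)[of N] by (intro powr_mono2) auto
    also have "\<dots> = K powr eps * real N powr (-(\<alpha> * eps))"
      using K N by (simp add: powr_mult powr_powr)
    finally have "ell N powr eps \<le> K powr eps / real N powr (\<alpha> * eps)"
      by (simp add: powr_minus divide_inverse)
    then have "b * real N powr (\<alpha> * eps) \<le> c / ell N powr eps"
      using assms(1) assms(4)[of N] K N by (simp add: b_def field_simps)
    then show ?case
      using N by (intro mult_left_mono) auto
  qed
  ultimately show ?thesis
    by (rule tendsto_sandwich[OF _ _ tendsto_const majorant])
qed

lemma sum_chi_mult_Fij_powr_le_1: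
  assumes l: "0 < l" and q: "0 < q"
    and small: "real N * exp (- exp (-2) * q / l powr eps) \<le> 1"
  shows "(\<Sum>j\<in>{0..<N} - {i}. chi l x i j * Fij N l eps x i j powr q) \<le> 1"
proof -
  let ?t = "\<lambda>j. chi l x i j * Fij N l eps x i j powr q"
  let ?\<delta> = "exp (- exp (-2) * q / l powr eps)"
  have "card ({0..<N} - {i}) \<le> N"
    using card_Diff1_le[of "{0..<N}" i] by simp
  then have "card ({0..<N} - {i}) * ?\<delta> \<le> 1"
    using small by (smt (verit) exp_gt_zero mult_right_mono of_nat_mono)
  moreover have "?t j \<le> ?\<delta>"
    if "j' \<in> {0..<N} - {i}" "j \<noteq> j'" "chi l x i j = 1" "chi l x i j' = 1" for j j'
  proof -
    have "chi l x i j * chi l x i j' * Fij N l eps x i j powr q \<le> ?\<delta>"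
      using that by (intro chi_mult_chi_mult_Fij_powr_le[OF l q]) auto
    with that show ?thesis
      by simp
  qed
  moreover have "0 \<le> ?t j" "?t j \<le> 1" for j
    using Fij_powr_le_1[OF l q] by (simp_all add: chi_def)
  moreover have "?t j = 0" if "chi l x i j \<noteq> 1" for j
    using that by (simp add: chi_def split: if_splits)
  ultimately show ?thesis
    by (intro sum_le_1_if_crowded_terms_small[where P = "\<lambda>j. chi l x i j = 1"]) auto
qed

theorem lemmaB1:
  fixes ell :: "nat \<Rightarrow> real" and eps :: real
  assumes epsb: "0 < eps" "eps < 1/10"
    and lpos: "\<And>N. 0 < ell N"
    and lsmall: "\<exists>\<alpha>>0. ell \<in> O(\<lambda>N. real N powr (-\<alpha>))"
  shows "\<exists>c>0. \<forall>q>0. \<exists>cq. \<exists>N0. \<forall>N\<ge>N0. \<forall>x :: nat \<Rightarrow> real ^ 3.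
           (\<forall>i<N. \<forall>j<N. \<forall>j'<N. j \<noteq> i \<longrightarrow> j' \<noteq> i \<longrightarrow> j \<noteq> j' \<longrightarrow>
              chi (ell N) x i j * chi (ell N) x i j' * Fij N (ell N) eps x i j powr q
                \<le> exp (- c * q / ell N powr eps)) \<and>
           (\<forall>i<N. (\<Sum>j\<in>{0..<N} - {i}. chi (ell N) x i j * Fij N (ell N) eps x i j powr q) \<le> cq)"
proof (rule exI[of _ "exp (-2)"], intro conjI allI impI)
  fix q :: real
  assume q: "0 < q"
  obtain \<alpha> where "\<alpha> > 0" "ell \<in> O(\<lambda>N. real N powr (-\<alpha>))"
    using lsmall by blast
  then have "((\<lambda>N. real N * exp (- exp (-2) * q / ell N powr eps)) \<longlongrightarrow> 0) at_top"
    using tendsto_mult_exp_neg_inverse_powr[of "exp (-2) * q" eps \<alpha> ell] q epsb lpos by simp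
  then have "\<forall>\<^sub>F N in at_top. real N * exp (- exp (-2) * q / ell N powr eps) < 1"
    by (rule order_tendstoD) simp
  then obtain N0 where N0: "\<And>N. N \<ge> N0 \<Longrightarrow> real N * exp (- exp (-2) * q / ell N powr eps) < 1"
    by (auto simp: eventually_at_top_linorder)
  show "\<exists>cq (N0::nat). \<forall>N\<ge>N0. \<forall>x :: nat \<Rightarrow> real ^ 3.
           (\<forall>i<N. \<forall>j<N. \<forall>j'<N. j \<noteq> i \<longrightarrow> j' \<noteq> i \<longrightarrow> j \<noteq> j' \<longrightarrow>
              chi (ell N) x i j * chi (ell N) x i j' * Fij N (ell N) eps x i j powr q
                \<le> exp (- exp (-2) * q / ell N powr eps)) \<and>
           (\<forall>i<N. (\<Sum>j\<in>{0..<N} - {i}. chi (ell N) x i j * Fij N (ell N) eps x i j powr q) \<le> cq)"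
  proof (rule exI[of _ 1], rule exI[of _ N0], intro allI impI conjI)
    fix N i j j' :: nat and x :: "nat \<Rightarrow> real ^ 3"
    assume "j' < N" "j' \<noteq> i" "j \<noteq> j'"
    then show "chi (ell N) x i j * chi (ell N) x i j' * Fij N (ell N) eps x i j powr q
                \<le> exp (- exp (-2) * q / ell N powr eps)"
      by (intro chi_mult_chi_mult_Fij_powr_le[OF lpos q]) auto
  next
    fix N i :: nat and x :: "nat \<Rightarrow> real ^ 3"
    assume "N0 \<le> N"
    then show "(\<Sum>j\<in>{0..<N} - {i}. chi (ell N) x i j * Fij N (ell N) eps x i j powr q) \<le> 1"
      by (rule sum_chi_mult_Fij_powr_le_1[OF lpos q less_imp_le[OF N0]])
  qed
qed simp

end
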